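(* There exist functions $f_n\colon\mathbb R^2\to\mathbb R$, $n\in\mathbb N$, such that the family $\{f_n(x,\cdot):n\in\mathbb N\}$ is equi-Baire 1 for every $x\in\mathbb R$ and the family $\{f_n(\cdot,y):n\in\mathbb N\}$ is equi-Baire 1 for every $y\in\mathbb R$, but for no nonmeager $G_\delta$ set $A\subseteq\mathbb R$ (in particular, for no comeager $G_\delta$ set $A$) is the family $\{f_n|_{A\times\mathbb R}:n\in\mathbb N\}$ equi-Baire 1 on $A\times\mathbb R$. Specifically, one can take $f_n=g$ for all $n$, where $g$ is the characteristic function of $\{(x,x):x\in B\}$ for a Bernstein set $B\subseteq\mathbb R$.
   Context: For metric spaces $(X,\rho)$, $(Y,d)$, a family $\mathcal F\subseteq Y^X$ is equi-Baire 1 if for every $\varepsilon>0$ there is $\delta_\varepsilon\colon X\to(0,\infty)$ such that for all $x,y\in X$ and all $f\in\mathcal F$, $\rho(x,y)<\min\{\delta_\varepsilon(x),\delta_\varepsilon(y)\}$ implies $d(f(x),f(y))<\varepsilon$. A Bernstein set is a set $B\subseteq\mathbb R$ such that both $B$ and $\mathbb R\setminus B$ meet every uncountable closed subset of $\mathbb R$. $\mathbb R^2$ and subsets carry the Euclidean metric. *)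

theory Defs
  imports "HOL-Analysis.Analysis"
begin

definition equi_baire1_on :: "'a::metric_space set \<Rightarrow> ('a \<Rightarrow> 'b::metric_space) set \<Rightarrow> bool" where
  "equi_baire1_on S F \<longleftrightarrow>
     (\<forall>\<epsilon>>0. \<exists>\<delta>::'a \<Rightarrow> real. (\<forall>x\<in>S. \<delta> x > 0) \<and>
        (\<forall>x\<in>S. \<forall>y\<in>S. \<forall>f\<in>F. dist x y < min (\<delta> x) (\<delta> y) \<longrightarrow> dist (f x) (f y) < \<epsilon>))"

definition nowhere_dense :: "'a::topological_space set \<Rightarrow> bool" where
  "nowhere_dense S \<longleftrightarrow> interior (closure S) = {}"

definition meager :: "'a::topological_space set \<Rightarrow> bool" where
  "meager S \<longleftrightarrow> (\<exists>N::nat \<Rightarrow> 'a set. (\<forall>n. nowhere_dense (N n)) \<and> S \<subseteq> (\<Union>n. N n))"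

definition bernstein :: "real set \<Rightarrow> bool" where
  "bernstein B \<longleftrightarrow>
     (\<forall>C. closed C \<and> uncountable C \<longrightarrow> B \<inter> C \<noteq> {} \<and> (- B) \<inter> C \<noteq> {})"

definition sep_equi_not_joint :: "(nat \<Rightarrow> real \<times> real \<Rightarrow> real) \<Rightarrow> bool" where
  "sep_equi_not_joint f \<longleftrightarrow>
     (\<forall>x. equi_baire1_on UNIV (range (\<lambda>n y. f n (x, y)))) \<and>
     (\<forall>y. equi_baire1_on UNIV (range (\<lambda>n x. f n (x, y)))) \<and>
     (\<forall>A::real set. gdelta A \<and> \<not> meager A \<longrightarrow> \<not> equi_baire1_on (A \<times> UNIV) (range f))"

end

theory Submission
  imports Defs
begin

text \<open>Every section of the indicator \<open>g\<close> of the diagonal over a Bernstein set \<open>B\<close> vanishes off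
  a single point, so each family of sections is equi-Baire 1. Suppose \<open>\<delta>\<close> witnessed equi-Baire 1
  for \<open>\<epsilon> = 1\<close> on \<open>A \<times> \<real>\<close> with \<open>A\<close> a non-meager \<open>G\<^sub>\<delta>\<close> set. Sorting the points of
  \<open>A \<inter> B\<close> and \<open>A - B\<close> by the size of \<open>\<delta>\<close> on the diagonal covers \<open>A\<close> by countably many
  pieces, so the closure of some piece meets \<open>A\<close> in a non-meager set. Inside a \<open>G\<^sub>\<delta>\<close> set such a
  set contains an uncountable closed set (a Cantor scheme through the dense open sets), which by the
  Bernstein property contains a point of the opposite side. That point is arbitrarily close to the
  piece, giving two diagonal points within \<open>\<delta>\<close> of each other on which \<open>g\<close> takes the values
  \<open>0\<close> and \<open>1\<close>. Bernstein sets exist by transfinite recursion over the continuum many uncountable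
  closed sets, each of which has the cardinality of the continuum.\<close>

section \<open>Meager sets\<close>

lemma nowhere_dense_empty [simp]: "nowhere_dense {}"
  by (simp add: nowhere_dense_def)

lemma meager_iff_countable_cover:
  "meager S \<longleftrightarrow> (\<exists>\<N>. countable \<N> \<and> (\<forall>N\<in>\<N>. nowhere_dense N) \<and> S \<subseteq> \<Union>\<N>)"
proof
  assume "meager S"
  then obtain N :: "nat \<Rightarrow> _" where "\<forall>n. nowhere_dense (N n)" "S \<subseteq> (\<Union>n. N n)"
    by (auto simp: meager_def)
  then show "\<exists>\<N>. countable \<N> \<and> (\<forall>N\<in>\<N>. nowhere_dense N) \<and> S \<subseteq> \<Union>\<N>"
    by (intro exI[of _ "range N"]) auto
next
  assume "\<exists>\<N>. countable \<N> \<and> (\<forall>N\<in>\<N>. nowhere_dense N) \<and> S \<subseteq> \<Union>\<N>"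
  then obtain \<N> where \<N>: "countable \<N>" "\<forall>N\<in>\<N>. nowhere_dense N" "S \<subseteq> \<Union>\<N>"
    by blast
  show "meager S"
  proof (cases "\<N> = {}")
    case True
    then show ?thesis using \<N>(3) by (auto simp: meager_def intro!: exI[of _ "\<lambda>_. {}"])
  next
    case False
    then have "range (from_nat_into \<N>) = \<N>"
      using \<N>(1) by (rule range_from_nat_into)
    then show ?thesis
      using \<N> unfolding meager_def by (intro exI[of _ "from_nat_into \<N>"]) auto
  qed
qed

lemma nowhere_dense_imp_meager: "nowhere_dense S \<Longrightarrow> meager S"
  unfolding meager_def by (intro exI[of _ "\<lambda>_. S"]) auto

lemma meager_subset: "meager T \<Longrightarrow> S \<subseteq> T \<Longrightarrow> meager S"
  unfolding meager_def by blast

lemma meager_UN: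
  assumes "countable I" "\<And>i. i \<in> I \<Longrightarrow> meager (S i)"
  shows "meager (\<Union>i\<in>I. S i)"
proof -
  have "\<exists>\<N>. countable \<N> \<and> (\<forall>N\<in>\<N>. nowhere_dense N) \<and> S i \<subseteq> \<Union>\<N>" if "i \<in> I" for i
    using assms(2)[OF that] by (simp add: meager_iff_countable_cover)
  then obtain \<N> where \<N>: "\<And>i. i \<in> I \<Longrightarrow> countable (\<N> i) \<and> (\<forall>N\<in>\<N> i. nowhere_dense N) \<and> S i \<subseteq> \<Union>(\<N> i)"
    by metis
  show ?thesis
    unfolding meager_iff_countable_cover
  proof (intro exI conjI)
    show "countable (\<Union>i\<in>I. \<N> i)"
      using \<N> assms(1) by (intro countable_UN) auto
  qed (use \<N> in fastforce)+
qed

lemma not_meager_imp_interval_in_closure: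
  fixes W :: "real set"
  assumes "\<not> meager W"
  obtains a b where "a < b" "{a..b} \<subseteq> closure W"
proof -
  have "\<not> nowhere_dense W"
    using assms nowhere_dense_imp_meager by blast
  then obtain x where "x \<in> interior (closure W)"
    unfolding nowhere_dense_def by blast
  then obtain e where "e > 0" "cball x e \<subseteq> closure W"
    using mem_interior_cball by blast
  moreover have "{x - e..x + e} = cball x e"
    by (auto simp: dist_real_def)
  ultimately show ?thesis
    using that[of "x - e" "x + e"] by auto
qed


section \<open>Uncountable closed subsets of non-meager \<open>G\<^sub>\<delta>\<close> sets\<close>

lemma closed_interval_in_open_Int_interval:
  fixes U :: "real set"
  assumes "open U" "{c<..<d} \<inter> U \<noteq> {}"
  obtains c' d' where "c < c'" "c' < d'" "d' < d" "{c'..d'} \<subseteq> U"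
proof -
  obtain x where x: "x \<in> {c<..<d} \<inter> U"
    using assms(2) by blast
  moreover have "open ({c<..<d} \<inter> U)"
    using assms(1) by (simp add: open_Int)
  ultimately obtain e where e: "e > 0" "cball x e \<subseteq> {c<..<d} \<inter> U"
    using open_contains_cball by blast
  moreover have "{x - e..x + e} = cball x e"
    by (auto simp: dist_real_def)
  moreover have "x - e \<in> cball x e" "x + e \<in> cball x e"
    using e(1) by (simp_all add: dist_real_def)
  then have "x - e \<in> {c<..<d}" "x + e \<in> {c<..<d}"
    using e(2) by blast+
  ultimately show ?thesis
    using that[of "x - e" "x + e"] by auto
qed

fun half :: "bool \<Rightarrow> real \<times> real \<Rightarrow> real \<times> real" where
  "half x (c, d) = (if x then ((c + d) / 2, d) else (c, (c + d) / 2))"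

locale dense_open_sequence =
  fixes U :: "nat \<Rightarrow> real set" and a b :: real
  assumes a_less_b: "a < b"
    and open_U: "\<And>n. open (U n)"
    and dense_U: "\<And>n c d. a \<le> c \<Longrightarrow> c < d \<Longrightarrow> d \<le> b \<Longrightarrow> {c<..<d} \<inter> U n \<noteq> {}"
begin

definition subinterval :: "nat \<Rightarrow> real \<times> real \<Rightarrow> real \<times> real" where
  "subinterval n cd =
     (SOME cd'. fst cd < fst cd' \<and> fst cd' < snd cd' \<and> snd cd' < snd cd \<and> {fst cd'..snd cd'} \<subseteq> U n)"

lemma subinterval:
  fixes n :: nat
  assumes "a \<le> c" "c < d" "d \<le> b"
  defines "cd' \<equiv> subinterval n (c, d)"
  shows "c < fst cd' \<and> fst cd' < snd cd' \<and> snd cd' < d \<and> {fst cd'..snd cd'} \<subseteq> U n"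
proof -
  obtain c' d' where "c < c'" "c' < d'" "d' < d" "{c'..d'} \<subseteq> U n"
    using closed_interval_in_open_Int_interval[OF open_U dense_U[OF assms(1-3)]] .
  then have "\<exists>cd'. c < fst cd' \<and> fst cd' < snd cd' \<and> snd cd' < d \<and> {fst cd'..snd cd'} \<subseteq> U n"
    by (intro exI[of _ "(c', d')"]) auto
  then show ?thesis
    unfolding cd'_def subinterval_def fst_conv snd_conv by (rule someI_ex)
qed

text \<open>Branches of the binary tree are coded by sets of naturals: on branch \<open>S\<close> the level-\<open>Suc k\<close>
  interval lies in the right half of the level-\<open>k\<close> one iff \<open>k \<in> S\<close>.\<close>
primrec interval :: "nat set \<Rightarrow> nat \<Rightarrow> real \<times> real" where
  "interval S 0 = (a, b)"
| "interval S (Suc k) = subinterval k (half (k \<in> S) (interval S k))"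

abbreviation seg :: "nat set \<Rightarrow> nat \<Rightarrow> real set" where
  "seg S k \<equiv> {fst (interval S k)..snd (interval S k)}"

lemma interval_Suc:
  fixes S k
  defines "c \<equiv> fst (interval S k)" and "d \<equiv> snd (interval S k)"
    and "c' \<equiv> fst (interval S (Suc k))" and "d' \<equiv> snd (interval S (Suc k))"
  assumes "a \<le> c" "c < d" "d \<le> b"
  shows "c < c' \<and> c' < d' \<and> d' < d \<and> {c'..d'} \<subseteq> U k \<and>
    (k \<in> S \<longrightarrow> (c + d) / 2 < c') \<and> (k \<notin> S \<longrightarrow> d' < (c + d) / 2)"
proof -
  have cd: "interval S k = (c, d)"
    by (simp add: c_def d_def)
  show ?thesis
  proof (cases "k \<in> S")
    case True
    then have "interval S (Suc k) = subinterval k ((c + d) / 2, d)"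
      using cd by simp
    with subinterval[of "(c + d) / 2" d k] assms(5-7) True show ?thesis
      unfolding c'_def d'_def by auto
  next
    case False
    then have "interval S (Suc k) = subinterval k (c, (c + d) / 2)"
      using cd by simp
    with subinterval[of c "(c + d) / 2" k] assms(5-7) False show ?thesis
      unfolding c'_def d'_def by auto
  qed
qed

lemma interval_bounds: "a \<le> fst (interval S k) \<and> fst (interval S k) < snd (interval S k) \<and> snd (interval S k) \<le> b"
proof (induction k)
  case 0
  then show ?case using a_less_b by simp
next
  case (Suc k)
  then show ?case
    using interval_Suc[of S k] by linarith
qed

lemma seg_Suc_subset: "seg S (Suc k) \<subseteq> seg S k \<inter> U k"
  using interval_Suc[of S k] interval_bounds[of S k] by auto

lemma seg_antimono: "k \<le> m \<Longrightarrow> seg S m \<subseteq> seg S k"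
  using lift_Suc_antimono_le[of "seg S"] seg_Suc_subset by blast

lemma interval_prefix: "(\<And>j. j < k \<Longrightarrow> j \<in> S \<longleftrightarrow> j \<in> T) \<Longrightarrow> interval S k = interval T k"
  by (induction k) auto

lemma seg_Suc_disjoint:
  assumes "interval S k = interval T k" "k \<in> S" "k \<notin> T"
  shows "seg S (Suc k) \<inter> seg T (Suc k) = {}"
  using interval_Suc[of S k] interval_Suc[of T k] interval_bounds[of S k] assms by auto

definition cantor_set :: "real set" where
  "cantor_set = (\<Inter>k. \<Union>S. seg S k)"

lemma closed_cantor_set: "closed cantor_set"
proof -
  have "range (\<lambda>S. seg S k) \<subseteq> (\<lambda>S. seg S k) ` Pow {..<k}" for k
  proof
    fix X assume "X \<in> range (\<lambda>S. seg S k)"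
    then obtain S where "X = seg S k"
      by blast
    moreover have "interval (S \<inter> {..<k}) k = interval S k"
      by (rule interval_prefix) auto
    ultimately show "X \<in> (\<lambda>S. seg S k) ` Pow {..<k}"
      by (intro image_eqI[of _ _ "S \<inter> {..<k}"]) auto
  qed
  then have "finite (range (\<lambda>S. seg S k))" for k
    by (rule finite_subset) auto
  then show ?thesis
    unfolding cantor_set_def by (intro closed_INT closed_Union) auto
qed

lemma cantor_set_subset: "cantor_set \<subseteq> {a..b} \<inter> (\<Inter>n. U n)"
proof
  fix x assume "x \<in> cantor_set"
  then have level: "\<exists>S. x \<in> seg S k" for k
    unfolding cantor_set_def by blast
  have "x \<in> {a..b}"
    using level[of 0] by auto
  moreover have "x \<in> U n" for n
    using level[of "Suc n"] seg_Suc_subset by blast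
  ultimately show "x \<in> {a..b} \<inter> (\<Inter>n. U n)"
    by blast
qed

definition branch_point :: "nat set \<Rightarrow> real" where
  "branch_point S = (SOME x. \<forall>k. x \<in> seg S k)"

lemma branch_point: "branch_point S \<in> seg S k"
proof -
  have "seg S k \<noteq> {}" for k
    using interval_bounds[of S k] by auto
  then have "\<Inter>(range (seg S)) \<noteq> {}"
    using seg_antimono by (intro compact_nest) auto
  then have "\<exists>x. \<forall>k. x \<in> seg S k"
    by blast
  then show ?thesis
    unfolding branch_point_def by (rule someI_ex[where P = "\<lambda>x. \<forall>k. x \<in> seg S k", THEN spec])
qed

lemma inj_branch_point: "inj branch_point"
proof (rule injI, rule ccontr)
  fix S T assume eq: "branch_point S = branch_point T" and "S \<noteq> T"
  then have "\<exists>k. k \<in> S \<longleftrightarrow> k \<notin> T"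
    by blast
  then obtain k where k: "k \<in> S \<longleftrightarrow> k \<notin> T" "\<And>j. j < k \<Longrightarrow> j \<in> S \<longleftrightarrow> j \<in> T"
    unfolding exists_least_iff[of "\<lambda>k. k \<in> S \<longleftrightarrow> k \<notin> T"] by blast
  have "interval S k = interval T k"
    by (rule interval_prefix[OF k(2)])
  then have "seg S (Suc k) \<inter> seg T (Suc k) = {}"
    using k(1) seg_Suc_disjoint[of S k T] seg_Suc_disjoint[of T k S] by (cases "k \<in> S") auto
  then show False
    using branch_point[of S "Suc k"] branch_point[of T "Suc k"] eq by auto
qed

lemma uncountable_cantor_set: "uncountable cantor_set"
proof
  assume "countable cantor_set"
  moreover have "range branch_point \<subseteq> cantor_set"
    unfolding cantor_set_def using branch_point by blast
  ultimately have "countable (range branch_point)"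
    by (rule countable_subset[rotated])
  then have "countable (UNIV :: nat set set)"
    using inj_branch_point by (rule countable_image_inj_on)
  then show False
    by (metis countable_eqpoll eqpoll_sym nat_sets_eqpoll_reals uncountable_UNIV_real)
qed

end

lemma uncountable_closed_subset_Inter_dense_open:
  fixes U :: "nat \<Rightarrow> real set"
  assumes "a < b" "\<And>n. open (U n)"
    and "\<And>n c d. a \<le> c \<Longrightarrow> c < d \<Longrightarrow> d \<le> b \<Longrightarrow> {c<..<d} \<inter> U n \<noteq> {}"
  obtains K where "closed K" "uncountable K" "K \<subseteq> {a..b} \<inter> (\<Inter>n. U n)"
proof -
  interpret dense_open_sequence U a b
    using assms by unfold_locales
  show ?thesis
    using that closed_cantor_set uncountable_cantor_set cantor_set_subset by blast
qed

lemma uncountable_closed_subset_of_non_meager: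
  fixes A G :: "real set"
  assumes "gdelta A" "closed G" "\<not> meager (A \<inter> G)"
  obtains K where "closed K" "uncountable K" "K \<subseteq> A \<inter> G"
proof -
  obtain U where U: "\<And>n::nat. open (U n)" "A = (\<Inter>n. U n)"
    using assms(1) by (auto elim: gdelta.cases)
  obtain a b where ab: "a < b" "{a..b} \<subseteq> closure (A \<inter> G)"
    using not_meager_imp_interval_in_closure[OF assms(3)] .
  have "{c<..<d} \<inter> U n \<noteq> {}" if "a \<le> c" "c < d" "d \<le> b" for n c d
  proof -
    have "(c + d) / 2 \<in> {a..b}" "(c + d) / 2 \<in> {c<..<d}"
      using that by auto
    then have "{c<..<d} \<inter> closure (A \<inter> G) \<noteq> {}"
      using ab(2) by blast
    then have "{c<..<d} \<inter> (A \<inter> G) \<noteq> {}"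
      by (simp add: open_Int_closure_eq_empty)
    then show ?thesis
      using U(2) by blast
  qed
  then obtain K where K: "closed K" "uncountable K" "K \<subseteq> {a..b} \<inter> (\<Inter>n. U n)"
    by (rule uncountable_closed_subset_Inter_dense_open[OF ab(1) U(1)])
  have "closure (A \<inter> G) \<subseteq> G"
    using assms(2) by (intro closure_minimal) auto
  then have "K \<subseteq> A \<inter> G"
    using K(3) ab(2) U(2) by blast
  with K(1,2) show ?thesis
    by (rule that)
qed


section \<open>Existence of Bernstein sets\<close>

unbundle cardinal_syntax

lemma countable_non_condensation_points:
  fixes C :: "'a::{metric_space, second_countable_topology} set"
  shows "countable {x \<in> C. \<exists>e>0. countable (C \<inter> ball x e)}"
proof -
  obtain \<B> :: "'a set set" where
    \<B>: "countable \<B>" "\<And>b. b \<in> \<B> \<Longrightarrow> open b" "\<And>S. open S \<Longrightarrow> \<exists>\<U>. \<U> \<subseteq> \<B> \<and> S = \<Union>\<U>"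
    by (metis univ_second_countable)
  define N where "N = (\<Union>b\<in>{b \<in> \<B>. countable (C \<inter> b)}. C \<inter> b)"
  have "x \<in> N" if x: "x \<in> C" and e: "e > 0" "countable (C \<inter> ball x e)" for x e
  proof -
    obtain \<U> where \<U>: "\<U> \<subseteq> \<B>" "ball x e = \<Union>\<U>"
      using \<B>(3)[OF open_ball] by blast
    moreover have "x \<in> \<Union>\<U>"
      using e(1) \<U>(2) centre_in_ball by metis
    then obtain b where "b \<in> \<U>" "x \<in> b"
      by (rule UnionE)
    ultimately have b: "b \<in> \<B>" "x \<in> b" "b \<subseteq> ball x e"
      by auto
    then have "C \<inter> b \<subseteq> C \<inter> ball x e"
      by blast
    then have "countable (C \<inter> b)"
      using e(2) by (rule countable_subset)
    then show ?thesis
      unfolding N_def using x b by blast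
  qed
  then have "{x \<in> C. \<exists>e>0. countable (C \<inter> ball x e)} \<subseteq> N"
    by auto
  moreover have "countable N"
    unfolding N_def using \<B>(1) by (intro countable_UN) auto
  ultimately show ?thesis
    by (rule countable_subset)
qed

lemma derived_set_of_euclidean: "euclidean derived_set_of S = {x. x islimpt S}"
  unfolding set_eq_iff in_derived_set_of islimpt_def by auto

lemma perfect_condensation_points:
  fixes C :: "'a::{metric_space, second_countable_topology} set"
  assumes "closed C"
  defines "P \<equiv> {x \<in> C. \<forall>e>0. uncountable (C \<inter> ball x e)}"
  shows "euclidean derived_set_of P = P"
proof -
  have countable_rest: "countable (C - P)"
    using countable_non_condensation_points[of C] unfolding P_def
    by (rule countable_subset[rotated]) auto
  have "x islimpt P" if "x \<in> P" for x
    unfolding islimpt_approachable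
  proof (intro allI impI)
    fix e :: real assume "e > 0"
    then have "uncountable (C \<inter> ball x e - ((C - P) \<union> {x}))"
      using that countable_rest unfolding P_def by (intro uncountable_minus_countable) auto
    then obtain y where "y \<in> C \<inter> ball x e - ((C - P) \<union> {x})"
      by (metis all_not_in_conv countable_empty)
    then show "\<exists>y\<in>P. y \<noteq> x \<and> dist y x < e"
      by (auto simp: dist_commute)
  qed
  moreover have "x \<in> P" if "x islimpt P" for x
  proof -
    have "x islimpt C"
      using that unfolding P_def by (rule islimpt_subset) auto
    then have "x \<in> C"
      using assms(1) by (simp add: closed_limpt)
    moreover have "uncountable (C \<inter> ball x e)" if "e > 0" for e
    proof -
      obtain y where y: "y \<in> P" "dist y x < e"
        using \<open>x islimpt P\<close> \<open>e > 0\<close> unfolding islimpt_approachable by blast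
      then have "uncountable (C \<inter> ball y (e - dist y x))"
        unfolding P_def by simp
      moreover have "ball y (e - dist y x) \<subseteq> ball x e"
      proof
        fix z assume "z \<in> ball y (e - dist y x)"
        then show "z \<in> ball x e"
          using dist_triangle[of x z y] by (simp add: dist_commute)
      qed
      ultimately show ?thesis
        by (meson Int_mono countable_subset order_refl)
    qed
    ultimately show ?thesis
      unfolding P_def by blast
  qed
  ultimately show ?thesis
    unfolding derived_set_of_euclidean by blast
qed

lemma uncountable_closed_imp_continuum_lepoll:
  fixes C :: "'a::polish_space set"
  assumes "closed C" "uncountable C"
  shows "(UNIV :: real set) \<lesssim> C"
proof -
  define P where "P = {x \<in> C. \<forall>e>0. uncountable (C \<inter> ball x e)}"
  have "countable (C - P)"
    using countable_non_condensation_points[of C] unfolding P_def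
    by (rule countable_subset[rotated]) auto
  then have "P \<noteq> {}"
    using assms(2) by (metis Diff_empty)
  then have "(UNIV :: real set) \<lesssim> P"
    using perfect_condensation_points[OF assms(1)] completely_metrizable_space_euclidean
    unfolding P_def by (intro lepoll_perfect_set) auto
  also have "P \<lesssim> C"
    unfolding P_def by (intro subset_imp_lepoll) auto
  finally show ?thesis .
qed

lemma closed_sets_lepoll_continuum:
  "{C :: 'a::second_countable_topology set. closed C} \<lesssim> (UNIV :: real set)"
proof -
  obtain \<B> :: "'a set set" where
    \<B>: "countable \<B>" "\<And>b. b \<in> \<B> \<Longrightarrow> open b" "\<And>S. open S \<Longrightarrow> \<exists>\<U>. \<U> \<subseteq> \<B> \<and> S = \<Union>\<U>"
    by (metis univ_second_countable)
  define code where "code C = to_nat_on \<B> ` {b \<in> \<B>. b \<inter> C = {}}" for C :: "'a set"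
  have complement: "- C = \<Union>{b \<in> \<B>. b \<inter> C = {}}" if "closed C" for C
  proof -
    obtain \<U> where "\<U> \<subseteq> \<B>" "- C = \<Union>\<U>"
      using \<B>(3)[of "- C"] \<open>closed C\<close> by auto
    then show ?thesis
      by blast
  qed
  have "inj_on code {C. closed C}"
  proof (rule inj_onI)
    fix C D assume "C \<in> {C. closed C}" "D \<in> {C. closed C}" and "code C = code D"
    then have "{b \<in> \<B>. b \<inter> C = {}} = {b \<in> \<B>. b \<inter> D = {}}"
      unfolding code_def by (subst (asm) inj_on_image_eq_iff[OF inj_on_to_nat_on[OF \<B>(1)]]) auto
    with complement[of C] complement[of D] \<open>C \<in> {C. closed C}\<close> \<open>D \<in> {C. closed C}\<close>
    show "C = D"
      by (metis compl_eq_compl_iff mem_Collect_eq)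
  qed
  then have "{C :: 'a set. closed C} \<lesssim> (UNIV :: nat set set)"
    unfolding lepoll_def by (intro exI[of _ code]) auto
  also have "(UNIV :: nat set set) \<lesssim> (UNIV :: real set)"
    by (simp add: eqpoll_imp_lepoll nat_sets_eqpoll_reals)
  finally show ?thesis .
qed

lemma exists_set_splitting_family:
  fixes \<C> :: "'a set set"
  assumes infinite: "\<And>C. C \<in> \<C> \<Longrightarrow> infinite C"
    and small: "\<And>C. C \<in> \<C> \<Longrightarrow> |\<C>| \<le>o |C|"
  shows "\<exists>B. \<forall>C\<in>\<C>. C \<inter> B \<noteq> {} \<and> C - B \<noteq> {}"
proof -
  define r where "r = |\<C>|"
  have wo: "wo_rel r"
    unfolding r_def wo_rel_def by (rule card_of_Well_order)
  have field: "Field r = \<C>"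
    by (simp add: r_def Field_card_of)
  define used where
    "used f C = (\<lambda>D. fst (f D)) ` underS r C \<union> (\<lambda>D. snd (f D)) ` underS r C"
    for f :: "'a set \<Rightarrow> 'a \<times> 'a" and C
  define H where
    "H f C = (SOME p. fst p \<in> C \<and> snd p \<in> C \<and> fst p \<noteq> snd p \<and> fst p \<notin> used f C \<and> snd p \<notin> used f C)"
    for f C
  text \<open>Transfinite recursion along the initial well-order of \<open>\<C>\<close>: every \<open>C\<close> receives two fresh
    points, one put into \<open>B\<close> and one kept out of it.\<close>
  define F where "F = wo_rel.worec r H"
  have "wo_rel.adm_wo r H"
    unfolding wo_rel.adm_wo_def[OF wo] H_def used_def by (auto intro!: arg_cong[where f = Eps])
  then have F_eq: "F C = H F C" for C
    unfolding F_def using wo_rel.worec_fixpoint[OF wo] by metis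
  have fresh: "fst (F C) \<in> C \<and> snd (F C) \<in> C \<and> fst (F C) \<noteq> snd (F C) \<and>
      fst (F C) \<notin> used F C \<and> snd (F C) \<notin> used F C" if C: "C \<in> \<C>" for C
  proof -
    have "|underS r C| <o |C|"
      using card_of_underS[OF card_of_Card_order, of C \<C>] C small[OF C]
      unfolding r_def Field_card_of by (blast intro: ordLess_ordLeq_trans)
    then have used_small: "|used F C| <o |C|"
      unfolding used_def using infinite[OF C]
      by (intro card_of_Un_ordLess_infinite) (blast intro: ordLeq_ordLess_trans card_of_image)+
    have single: "|{p}| <o |C|" for p
      using infinite[OF C] by (intro finite_ordLess_infinite card_of_Well_order) (simp_all add: Field_card_of)
    have avoid: "\<not> C \<subseteq> used F C \<union> {p}" for p
    proof
      assume "C \<subseteq> used F C \<union> {p}"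
      then have "|C| \<le>o |used F C \<union> {p}|"
        by (rule card_of_mono1)
      moreover have "|used F C \<union> {p}| <o |C|"
        by (rule card_of_Un_ordLess_infinite[OF infinite[OF C] used_small single])
      ultimately show False
        using not_ordLess_ordLeq by blast
    qed
    obtain p where "p \<in> C" "p \<notin> used F C"
      using avoid[of undefined] by blast
    moreover obtain q where "q \<in> C" "q \<notin> used F C" "q \<noteq> p"
      using avoid[of p] by blast
    ultimately have "\<exists>pq. fst pq \<in> C \<and> snd pq \<in> C \<and> fst pq \<noteq> snd pq \<and> fst pq \<notin> used F C \<and> snd pq \<notin> used F C"
      by (intro exI[of _ "(p, q)"]) auto
    then have "fst (H F C) \<in> C \<and> snd (H F C) \<in> C \<and> fst (H F C) \<noteq> snd (H F C) \<and>
        fst (H F C) \<notin> used F C \<and> snd (H F C) \<notin> used F C"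
      unfolding H_def by (rule someI_ex)
    then show ?thesis
      unfolding F_eq[of C] .
  qed
  define B where "B = (\<lambda>C. fst (F C)) ` \<C>"
  have "snd (F C) \<notin> B" if C: "C \<in> \<C>" for C
  proof
    assume "snd (F C) \<in> B"
    then obtain D where D: "D \<in> \<C>" "snd (F C) = fst (F D)"
      unfolding B_def by blast
    have "(C, D) \<in> r \<or> (D, C) \<in> r"
      using wo_rel.TOTALS[OF wo] C D(1) unfolding field by blast
    then consider "D = C" | "C \<in> underS r D" | "D \<in> underS r C"
      unfolding underS_def by blast
    then show False
    proof cases
      case 1
      then show False using fresh[OF C] D(2) by simp
    next
      case 2
      then have "snd (F C) \<in> used F D"
        unfolding used_def by blast
      then show False using fresh[OF D(1)] D(2) by simp
    next
      case 3
      then have "fst (F D) \<in> used F C"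
        unfolding used_def by blast
      then show False using fresh[OF C] D(2) by simp
    qed
  qed
  then have "\<forall>C\<in>\<C>. C \<inter> B \<noteq> {} \<and> C - B \<noteq> {}"
    using fresh unfolding B_def by blast
  then show ?thesis
    by blast
qed

theorem bernstein_set_exists: "\<exists>B. bernstein B"
proof -
  define \<C> where "\<C> = {C :: real set. closed C \<and> uncountable C}"
  have "|\<C>| \<le>o |C|" if "C \<in> \<C>" for C
  proof -
    have "\<C> \<lesssim> (UNIV :: real set)"
      unfolding \<C>_def using closed_sets_lepoll_continuum
      by (rule lepoll_trans[rotated]) (auto intro: subset_imp_lepoll)
    also have "(UNIV :: real set) \<lesssim> C"
      using that unfolding \<C>_def by (auto intro: uncountable_closed_imp_continuum_lepoll)
    finally show ?thesis
      unfolding lepoll_def by (blast intro: card_of_ordLeq[THEN iffD1])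
  qed
  moreover have "infinite C" if "C \<in> \<C>" for C
    using that unfolding \<C>_def by (auto dest: countable_finite)
  ultimately obtain B where "\<forall>C\<in>\<C>. C \<inter> B \<noteq> {} \<and> C - B \<noteq> {}"
    using exists_set_splitting_family by blast
  then show ?thesis
    unfolding bernstein_def \<C>_def by (intro exI[of _ B]) auto
qed


section \<open>The diagonal indicator of a Bernstein set\<close>

lemma bernstein_Compl: "bernstein B \<Longrightarrow> bernstein (- B)"
  unfolding bernstein_def by auto

lemma meager_closure_of_points_far_from_complement:
  fixes A P :: "real set" and d :: "real \<Rightarrow> real"
  assumes "bernstein P" "gdelta A" "\<And>t. t \<in> A \<Longrightarrow> d t > 0"
    and far: "\<And>b c. b \<in> A \<inter> P \<Longrightarrow> c \<in> A - P \<Longrightarrow> min (d b) (d c) \<le> dist b c"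
    and "r > 0"
  shows "meager (A \<inter> closure {t \<in> A - P. r < d t})"
proof (rule ccontr)
  assume "\<not> meager (A \<inter> closure {t \<in> A - P. r < d t})"
  then obtain K where K: "closed K" "uncountable K" "K \<subseteq> A \<inter> closure {t \<in> A - P. r < d t}"
    using uncountable_closed_subset_of_non_meager[OF assms(2)] by blast
  then obtain b where b: "b \<in> P" "b \<in> K"
    using assms(1) unfolding bernstein_def by blast
  then have "b \<in> A" "b \<in> closure {t \<in> A - P. r < d t}"
    using K(3) by auto
  moreover have "min (d b) r > 0"
    using assms(3,5) \<open>b \<in> A\<close> by simp
  ultimately obtain c where c: "c \<in> A - P" "r < d c" "dist c b < min (d b) r"
    unfolding closure_approachable by blast
  then have "dist b c < min (d b) (d c)"
    by (simp add: dist_commute)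
  then show False
    using far[of b c] b(1) \<open>b \<in> A\<close> c(1) by (auto simp: min_le_iff_disj)
qed

lemma bernstein_close_pair:
  fixes A B :: "real set" and d :: "real \<Rightarrow> real"
  assumes "bernstein B" "gdelta A" "\<not> meager A" "\<And>t. t \<in> A \<Longrightarrow> d t > 0"
  shows "\<exists>b\<in>A \<inter> B. \<exists>c\<in>A - B. dist b c < min (d b) (d c)"
proof (rule ccontr)
  assume "\<not> ?thesis"
  then have far_B: "min (d b) (d c) \<le> dist b c" if "b \<in> A \<inter> B" "c \<in> A - B" for b c
    using that by (auto simp: not_less min_le_iff_disj)
  have far: "min (d b) (d c) \<le> dist b c" if "P \<in> {B, - B}" "b \<in> A \<inter> P" "c \<in> A - P" for P b c
    using that far_B[of b c] far_B[of c b] by (auto simp: dist_commute min.commute)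
  define L where "L P n = A \<inter> closure {t \<in> A - P. 1 / Suc n < d t}" for P n
  have "meager (L P n)" if "P \<in> {B, - B}" for P n
    unfolding L_def using bernstein_Compl[OF assms(1)] assms(1) that
    by (intro meager_closure_of_points_far_from_complement[OF _ assms(2,4)] far) auto
  then have "meager (\<Union>(P, n)\<in>{B, - B} \<times> UNIV. L P n)"
    by (intro meager_UN) auto
  moreover have "A \<subseteq> (\<Union>(P, n)\<in>{B, - B} \<times> UNIV. L P n)"
  proof
    fix t assume "t \<in> A"
    then obtain n where "1 / Suc n < d t"
      using assms(4) by (metis inverse_eq_divide of_nat_Suc reals_Archimedean)
    then have "t \<in> L (if t \<in> B then - B else B) n"
      unfolding L_def using \<open>t \<in> A\<close> closure_subset by fastforce
    then show "t \<in> (\<Union>(P, n)\<in>{B, - B} \<times> UNIV. L P n)"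
      by (intro UN_I[of "(if t \<in> B then - B else B, n)"]) auto
  qed
  ultimately show False
    using assms(3) meager_subset by blast
qed

lemma equi_baire1_on_constant_off_point:
  fixes F :: "('a::metric_space \<Rightarrow> 'b::metric_space) set"
  assumes "\<And>f y z. f \<in> F \<Longrightarrow> y \<noteq> p \<Longrightarrow> z \<noteq> p \<Longrightarrow> f y = f z"
  shows "equi_baire1_on UNIV F"
  unfolding equi_baire1_on_def
proof (intro allI impI exI conjI)
  fix \<epsilon> :: real assume "\<epsilon> > 0"
  text \<open>Points away from \<open>p\<close> get a radius that excludes \<open>p\<close>, so any two points closer than
    both radii are either both \<open>p\<close> or both different from \<open>p\<close>.\<close>
  define \<delta> where "\<delta> y = (if y = p then 1 else dist y p)" for y
  show "\<forall>x\<in>UNIV. \<delta> x > 0"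
    by (simp add: \<delta>_def)
  show "\<forall>x\<in>UNIV. \<forall>y\<in>UNIV. \<forall>f\<in>F. dist x y < min (\<delta> x) (\<delta> y) \<longrightarrow> dist (f x) (f y) < \<epsilon>"
  proof (intro ballI impI)
    fix x y f assume "f \<in> F" and close: "dist x y < min (\<delta> x) (\<delta> y)"
    then have "f x = f y"
    proof (cases "x = p \<or> y = p")
      case True
      with close have "x = y"
        by (auto simp: \<delta>_def dist_commute split: if_splits)
      then show ?thesis
        by simp
    qed (use assms \<open>f \<in> F\<close> in blast)
    then show "dist (f x) (f y) < \<epsilon>"
      using \<open>\<epsilon> > 0\<close> by simp
  qed
qed

lemma dist_diagonal_le: "dist (x, x) (y, y) \<le> 2 * dist x y"
proof -
  have "dist (x, x) (y, y) = sqrt 2 * dist x y"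
    by (simp add: dist_Pair_Pair real_sqrt_mult power2_eq_square)
  also have "\<dots> \<le> 2 * dist x y"
    by (intro mult_right_mono) (simp_all add: real_le_lsqrt)
  finally show ?thesis .
qed

theorem sep_equi_not_joint_bernstein_diagonal:
  assumes "bernstein B"
  shows "sep_equi_not_joint (\<lambda>n. indicator {(x, x) | x. x \<in> B})"
proof -
  define D where "D = {(x, x) | x. x \<in> B}"
  have ind: "indicator D (u, v) = (if u = v \<and> u \<in> B then 1 else 0 :: real)" for u v
    by (auto simp: D_def indicator_def)
  have "equi_baire1_on UNIV (range (\<lambda>n y. indicator D (x, y) :: real))" for x
    by (rule equi_baire1_on_constant_off_point[where p = x]) (auto simp: ind)
  moreover have "equi_baire1_on UNIV (range (\<lambda>n x. indicator D (x, y) :: real))" for y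
    by (rule equi_baire1_on_constant_off_point[where p = y]) (auto simp: ind)
  moreover have "\<not> equi_baire1_on (A \<times> UNIV) (range (\<lambda>n. indicator D :: real \<times> real \<Rightarrow> real))"
    if A: "gdelta A" "\<not> meager A" for A
  proof
    assume "equi_baire1_on (A \<times> UNIV) (range (\<lambda>n. indicator D :: real \<times> real \<Rightarrow> real))"
    then obtain \<delta> where \<delta>: "\<And>p. p \<in> A \<times> UNIV \<Longrightarrow> \<delta> p > 0"
      "\<And>p q. p \<in> A \<times> UNIV \<Longrightarrow> q \<in> A \<times> UNIV \<Longrightarrow> dist p q < min (\<delta> p) (\<delta> q) \<Longrightarrow>
         dist (indicator D p :: real) (indicator D q) < 1"
      unfolding equi_baire1_on_def by (metis rangeI zero_less_one)
    obtain b c where bc: "b \<in> A \<inter> B" "c \<in> A - B"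
      "dist b c < min (\<delta> (b, b) / 2) (\<delta> (c, c) / 2)"
      using bernstein_close_pair[OF assms A, of "\<lambda>t. \<delta> (t, t) / 2"] \<delta>(1) by auto
    then have "dist (b, b) (c, c) < min (\<delta> (b, b)) (\<delta> (c, c))"
      using dist_diagonal_le[of b c] by linarith
    then show False
      using \<delta>(2)[of "(b, b)" "(c, c)"] bc by (simp add: ind)
  qed
  ultimately show ?thesis
    unfolding sep_equi_not_joint_def D_def by blast
qed

theorem mainTheorem18:
  shows "(\<exists>f :: nat \<Rightarrow> real \<times> real \<Rightarrow> real. sep_equi_not_joint f) \<and>
         (\<forall>B. bernstein B \<longrightarrow>
            sep_equi_not_joint (\<lambda>n. indicator {(x, x) | x. x \<in> B}))"
  using bernstein_set_exists sep_equi_not_joint_bernstein_diagonal by blast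

end
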